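(* In any execution of Algorithm FS (with $T\ge 4$), let $v,w$ be active neighboring nodes in round $t$. (i) If $c_t(v)=c_t(w)+1$, then $w$ does not induce $v$ in round $t$. (ii) If $c_t(v)=c_t(w)$, then $w$ does not induce $v$ in round $t$.
   Context: Model (beeping model with arbitrary activations). $G=(V,E)$ finite connected undirected graph; synchronous rounds; in each round each active node either beeps or listens; a listening node learns only whether at least one neighbor beeped. $T\ge 4$ is an integer; checkpoints $\mathit{CP}=\{c\in\mathbb{N}_0: c\equiv 0\pmod 4,\ T-c>3\}$. Algorithm FS. Each node $v$ stores $\delta(v)\in\{0,\dots,T-1\}$, $\mathit{State}(v)\in\{\mathit{Inactive},\mathit{Beep},\mathit{Listen}\}$, $\mathit{Induced}(v)\in\{\mathit{true},\mathit{false}\}$. Initially all nodes are Inactive. A node $v$ is activated in round $t$ if the adversary activates it in round $t$, or $v$ is inactive and some neighbor beeps in round $t-1$; then at the beginning of round $t$, $\delta(v)=1$, $\mathit{State}(v)=\mathit{Beep}$, $\mathit{Induced}(v)=\mathit{true}$. In each round each active node $v$, according to its state at the beginning of the round: (1) if $\mathit{State}(v)=\mathit{Beep}$: beeps; $\delta(v)\gets\delta(v)+1\bmod T$; $\mathit{State}(v)\gets\mathit{Listen}$; (2) if $\mathit{State}(v)=\mathit{Listen}$ and some neighbor beeps: if $\delta(v)\equiv c-1\pmod T$ for some $c\in\mathit{CP}$, then $\delta(v)\gets\delta(v)+2\bmod T$, $\mathit{State}(v)\gets\mathit{Beep}$, $\mathit{Induced}(v)\gets\mathit{true}$; else $\delta(v)\gets\delta(v)+1\bmod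 T$; (3) if $\mathit{State}(v)=\mathit{Listen}$ and no neighbor beeps: $\delta(v)\gets\delta(v)+1\bmod T$; then if ($\mathit{Induced}(v)=\mathit{true}$ and new $\delta(v)\in\mathit{CP}$) or new $\delta(v)=0$: $\mathit{State}(v)\gets\mathit{Beep}$, $\mathit{Induced}(v)\gets\mathit{false}$. We say $w$ \emph{induces} $v$ in round $t$ if $w\in N(v)$ beeps in round $t$ and $v$ executes the first branch of rule (2) in round $t$. Virtual counter: if $v$ is activated in round $t_0$ then $c_{t_0}(v)=0$, and $c_{t+1}(v)=c_t(v)+a$, where $a\in\{1,2\}$ is the amount added to $\delta(v)$ (before reduction mod $T$) in round $t$. *)

theory Defs
  imports Main
begin

datatype nstate = Inactive | Beep | Listen

text \<open>Local configuration of a node: delta, State, Induced, and the virtual counter c.\<close>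
datatype cfg = Cfg (delta: nat) (st: nstate) (ind: bool) (ctr: nat)

definition CP :: "nat \<Rightarrow> nat set" where
  "CP T = {c. c mod 4 = 0 \<and> int T - int c > 3}"

definition at_cp_minus_1 :: "nat \<Rightarrow> nat \<Rightarrow> bool" where
  "at_cp_minus_1 T d \<longleftrightarrow> (\<exists>c\<in>CP T. int d mod int T = (int c - 1) mod int T)"

text \<open>One round of Algorithm FS for a single node; nb = some neighbor beeps in this round.
  The virtual counter is increased by the amount added to delta.\<close>
fun fs_step :: "nat \<Rightarrow> bool \<Rightarrow> cfg \<Rightarrow> cfg" where
  "fs_step T nb (Cfg d Inactive i k) = Cfg d Inactive i k"
| "fs_step T nb (Cfg d Beep i k) = Cfg ((d + 1) mod T) Listen i (k + 1)"
| "fs_step T nb (Cfg d Listen i k) =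
     (if nb then
        (if at_cp_minus_1 T d then Cfg ((d + 2) mod T) Beep True (k + 2)
         else Cfg ((d + 1) mod T) Listen i (k + 1))
      else
        (let d' = (d + 1) mod T in
         if (i \<and> d' \<in> CP T) \<or> d' = 0 then Cfg d' Beep False (k + 1)
         else Cfg d' Listen i (k + 1)))"

definition activated :: cfg where
  "activated = Cfg 1 Beep True 0"

definition inactive_cfg :: cfg where
  "inactive_cfg = Cfg 0 Inactive False 0"

text \<open>Execution of FS: exec T E adv t v is the configuration of v at the beginning of round t.
  adv t v means the adversary activates v in round t (effective only if v is inactive).\<close>
primrec exec :: "nat \<Rightarrow> ('v \<Rightarrow> 'v \<Rightarrow> bool) \<Rightarrow> (nat \<Rightarrow> 'v \<Rightarrow> bool) \<Rightarrow> nat \<Rightarrow> 'v \<Rightarrow> cfg" where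
  "exec T E adv 0 = (\<lambda>v. if adv 0 v then activated else inactive_cfg)"
| "exec T E adv (Suc t) =
     (\<lambda>v. let nb = (\<exists>u. E v u \<and> st (exec T E adv t u) = Beep);
              c' = fs_step T nb (exec T E adv t v)
          in if st c' = Inactive \<and> (adv (Suc t) v \<or> nb) then activated else c')"

definition active :: "nat \<Rightarrow> ('v \<Rightarrow> 'v \<Rightarrow> bool) \<Rightarrow> (nat \<Rightarrow> 'v \<Rightarrow> bool) \<Rightarrow> nat \<Rightarrow> 'v \<Rightarrow> bool" where
  "active T E adv t v \<longleftrightarrow> st (exec T E adv t v) \<noteq> Inactive"

text \<open>w induces v in round t: w is a neighbor of v beeping in round t and v executes the
  first branch of rule (2) in round t.\<close>
definition induces :: "nat \<Rightarrow> ('v \<Rightarrow> 'v \<Rightarrow> bool) \<Rightarrow> (nat \<Rightarrow> 'v \<Rightarrow> bool) \<Rightarrow> nat \<Rightarrow> 'v \<Rightarrow> 'v \<Rightarrow> bool" where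
  "induces T E adv t w v \<longleftrightarrow>
     E v w \<and> st (exec T E adv t w) = Beep \<and>
     st (exec T E adv t v) = Listen \<and> at_cp_minus_1 T (delta (exec T E adv t v))"

definition connected_graph :: "'v set \<Rightarrow> ('v \<Rightarrow> 'v \<Rightarrow> bool) \<Rightarrow> bool" where
  "connected_graph V E \<longleftrightarrow> finite V \<and> V \<noteq> {} \<and>
     (\<forall>u v. E u v \<longrightarrow> u \<in> V \<and> v \<in> V \<and> u \<noteq> v \<and> E v u) \<and>
     (\<forall>u\<in>V. \<forall>v\<in>V. E\<^sup>*\<^sup>* u v)"

end

theory Submission
  imports Defs
begin

text \<open>Two invariants hold for every node in every execution: an active node has
  \<open>\<delta> = (c + 1) mod T\<close>, and a node about to beep has \<open>\<delta>\<close> equal to a checkpoint or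
  to a checkpoint plus one. If \<open>w\<close> beeps and \<open>c(v) \<in> {c(w), c(w) + 1}\<close>, then
  \<open>\<delta>(v) + 1\<close> lies in \<open>{e + 1, e + 2, e + 3}\<close> for a checkpoint \<open>e\<close> with \<open>e + 3 < T\<close>;
  such a value is neither \<open>T\<close> nor a multiple of 4, so \<open>\<delta>(v)\<close> is not one before a
  checkpoint and \<open>v\<close> cannot be induced.\<close>

lemma zero_in_CP: "T \<ge> 4 \<Longrightarrow> 0 \<in> CP T"
  by (simp add: CP_def)

lemma CP_add_3_less: "c \<in> CP T \<Longrightarrow> c + 3 < T"
  by (simp add: CP_def)

lemma CP_mod_4: "c \<in> CP T \<Longrightarrow> c mod 4 = 0"
  by (simp add: CP_def)

lemma at_cp_minus_1_cases:
  assumes "d < T" "at_cp_minus_1 T d"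
  shows "d + 1 = T \<or> d + 1 \<in> CP T"
proof -
  obtain c where c: "c \<in> CP T" "int d mod int T = (int c - 1) mod int T"
    using assms(2) unfolding at_cp_minus_1_def by blast
  have "c + 3 < T" using c(1) by (rule CP_add_3_less)
  show ?thesis
  proof (cases "c = 0")
    case True
    then have "int d = int T - 1"
      using c(2) assms(1) by (simp add: zmod_minus1)
    then show ?thesis by simp
  next
    case False
    then have "int d = int c - 1"
      using c(2) assms(1) \<open>c + 3 < T\<close> by simp
    then have "d + 1 = c" using False by simp
    then show ?thesis using c(1) by simp
  qed
qed

lemma not_at_cp_minus_1_near_CP:
  assumes "e \<in> CP T" "d \<in> {e, e + 1, e + 2}"
  shows "\<not> at_cp_minus_1 T d"
proof
  assume cp: "at_cp_minus_1 T d"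
  have "d + 1 < T" using assms(2) CP_add_3_less[OF assms(1)] by auto
  then have "d + 1 \<in> CP T" using at_cp_minus_1_cases[OF _ cp] by simp
  then have "(d + 1) mod 4 = 0" by (rule CP_mod_4)
  moreover have "e mod 4 = 0" using assms(1) by (rule CP_mod_4)
  ultimately show False using assms(2) by (auto; presburger)
qed

definition fs_invariant :: "nat \<Rightarrow> cfg \<Rightarrow> bool" where
  "fs_invariant T c \<longleftrightarrow>
     (st c \<noteq> Inactive \<longrightarrow> delta c = (ctr c + 1) mod T) \<and>
     (st c = Beep \<longrightarrow> (\<exists>e\<in>CP T. delta c = e \<or> delta c = e + 1))"

lemma fs_invariant_activated: "T \<ge> 4 \<Longrightarrow> fs_invariant T activated"
  using zero_in_CP by (force simp add: fs_invariant_def activated_def)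

lemma fs_invariant_inactive: "fs_invariant T inactive_cfg"
  by (simp add: fs_invariant_def inactive_cfg_def)

lemma fs_invariant_fs_step_induced:
  assumes T: "T \<ge> 4" and dk: "d = (k + 1) mod T" and cp: "at_cp_minus_1 T d"
  shows "fs_invariant T (Cfg ((d + 2) mod T) Beep True (k + 2))"
proof -
  have "d < T" using dk T by simp
  have delta_eq: "(d + 2) mod T = (k + 2 + 1) mod T"
    using mod_add_left_eq[of "k + 1" T 2] dk by (simp add: add.assoc)
  have "\<exists>e\<in>CP T. (d + 2) mod T = e + 1"
    using at_cp_minus_1_cases[OF \<open>d < T\<close> cp]
  proof
    assume "d + 1 = T"
    then have "(d + 2) mod T = 0 + 1" using T by (simp add: mod_Suc)
    then show ?thesis using zero_in_CP[OF T] by blast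
  next
    assume "d + 1 \<in> CP T"
    then have "(d + 2) mod T = (d + 1) + 1" using CP_add_3_less by fastforce
    then show ?thesis using \<open>d + 1 \<in> CP T\<close> by blast
  qed
  then show ?thesis using delta_eq by (auto simp add: fs_invariant_def)
qed

lemma fs_invariant_fs_step:
  assumes T: "T \<ge> 4" and inv: "fs_invariant T c"
  shows "fs_invariant T (fs_step T nb c)"
proof (cases c)
  case (Cfg d s i k)
  show ?thesis
  proof (cases s)
    case Inactive
    then show ?thesis using inv Cfg by (simp add: fs_invariant_def)
  next
    case Beep
    then show ?thesis using inv Cfg by (simp add: fs_invariant_def mod_Suc_eq)
  next
    case Listen
    have dk: "d = (k + 1) mod T" using inv Cfg Listen by (simp add: fs_invariant_def)
    then have delta_eq: "(d + 1) mod T = (k + 1 + 1) mod T" by (simp add: mod_Suc_eq)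
    consider "nb" "at_cp_minus_1 T d" | "nb" "\<not> at_cp_minus_1 T d" | "\<not> nb" by blast
    then show ?thesis
    proof cases
      case 1
      then show ?thesis using Cfg Listen fs_invariant_fs_step_induced[OF T dk] by simp
    next
      case 2
      then show ?thesis using Cfg Listen delta_eq by (simp add: fs_invariant_def)
    next
      case 3
      then show ?thesis using Cfg Listen delta_eq zero_in_CP[OF T]
        by (auto simp add: fs_invariant_def Let_def)
    qed
  qed
qed

lemma fs_invariant_exec:
  assumes "T \<ge> 4"
  shows "fs_invariant T (exec T E adv t u)"
proof (induction t arbitrary: u)
  case 0
  show ?case
    using fs_invariant_activated[OF assms] fs_invariant_inactive by simp
next
  case (Suc t)
  show ?case
    using fs_invariant_fs_step[OF assms Suc.IH] fs_invariant_activated[OF assms]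
    by (simp add: Let_def)
qed

theorem mainTheorem6:
  fixes V :: "'v set" and E :: "'v \<Rightarrow> 'v \<Rightarrow> bool" and adv :: "nat \<Rightarrow> 'v \<Rightarrow> bool"
    and T t :: nat and v w :: 'v
  assumes "T \<ge> 4"
    and "connected_graph V E"
    and "\<And>s u. adv s u \<Longrightarrow> u \<in> V"
    and "v \<in> V" and "w \<in> V" and "E v w"
    and "active T E adv t v" and "active T E adv t w"
  shows "(ctr (exec T E adv t v) = ctr (exec T E adv t w) + 1 \<longrightarrow> \<not> induces T E adv t w v)
       \<and> (ctr (exec T E adv t v) = ctr (exec T E adv t w) \<longrightarrow> \<not> induces T E adv t w v)"
proof -
  define cv where "cv = exec T E adv t v"
  define cw where "cw = exec T E adv t w"
  have dv: "delta cv = (ctr cv + 1) mod T" and dw: "delta cw = (ctr cw + 1) mod T"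
    using fs_invariant_exec[OF assms(1), of E adv t] assms(7,8)
    by (auto simp add: cv_def cw_def active_def fs_invariant_def)
  have "\<not> induces T E adv t w v" if "ctr cv = ctr cw + 1 \<or> ctr cv = ctr cw"
  proof
    assume "induces T E adv t w v"
    then have "st cw = Beep" and "at_cp_minus_1 T (delta cv)"
      by (auto simp add: induces_def cv_def cw_def)
    then obtain e where e: "e \<in> CP T" "delta cw = e \<or> delta cw = e + 1"
      using fs_invariant_exec[OF assms(1)] by (force simp add: cw_def fs_invariant_def)
    have "delta cv = delta cw \<or> delta cv = (delta cw + 1) mod T"
      using that dv dw by (auto simp add: mod_Suc_eq)
    then have "delta cv \<in> {e, e + 1, e + 2}"
      using e CP_add_3_less[OF e(1)] by auto
    then show False
      using not_at_cp_minus_1_near_CP[OF e(1)] \<open>at_cp_minus_1 T (delta cv)\<close> by blast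
  qed
  then show ?thesis by (simp add: cv_def cw_def)
qed

end
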